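(* Consider a list of $l$ items with initial order $[a_1,a_2,\dots,a_l]$ and, for $s\ge1$, the request sequence $$\sigma_\gamma=\bigl\langle (a_l^3,a_{l-1}^3,\dots,a_1^3)^{2s}\bigr\rangle.$$ Under the full cost model, $\mathrm{MTFO}(\sigma_\gamma)=\mathrm{MTFE}(\sigma_\gamma)=s\,(3l^2+o(l^2))$, $\mathrm{TS}(\sigma_\gamma)=s\,(4l^2+o(l^2))$ and $\mathrm{OPT}(\sigma_\gamma)=s\,(2l^2+o(l^2))$, where the $o(l^2)$ terms depend only on $l$ and are $o(l^2)$ as $l\to\infty$.
   Context: Static list update: serving a request to the item at position $i$ (from the front) costs $i$ (full cost model); the accessed item may be moved closer to the front for free (free exchange); two adjacent items may be swapped at cost $1$ (paid exchange). $\mathrm{OPT}(\sigma)$ is the minimum cost of any offline algorithm from the same initial list. Notation: $a^3$ denotes three consecutive requests to $a$, and $(w)^{k}$ denotes $k$ concatenated copies of $w$. MTFO moves a requested item to the front on the 1st, 3rd, 5th, ... request to that item; MTFE on the 2nd, 4th, 6th, ... request; otherwise they leave it in place. TS (Timestamp): on a request to item $x$, if $x$ has been requested before and some item preceding $x$ has been requested at most once since the previous request to $x$, then $x$ is moved to immediately in front of the frontmost such item; otherwise nothing moves. *)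

theory Defs
  imports Main "HOL-Library.Landau_Symbols"
begin

text \<open>Lists are distinct lists of items; positions are 0-based via pos, so the
  full-cost-model cost of accessing item x in list xs is pos xs x + 1.\<close>

definition pos :: "'a list \<Rightarrow> 'a \<Rightarrow> nat" where
  "pos xs x = length (takeWhile (\<lambda>y. y \<noteq> x) xs)"

definition move_to :: "nat \<Rightarrow> 'a \<Rightarrow> 'a list \<Rightarrow> 'a list" where
  "move_to j x xs = take j (remove1 x xs) @ x # drop j (remove1 x xs)"

definition mtf :: "'a \<Rightarrow> 'a list \<Rightarrow> 'a list" where
  "mtf x xs = move_to 0 x xs"

definition swap_adj :: "nat \<Rightarrow> 'a list \<Rightarrow> 'a list" where
  "swap_adj i xs = xs[i := xs ! Suc i, Suc i := xs ! i]"

fun alg_cost :: "('a list \<Rightarrow> 'a list \<Rightarrow> 'a \<Rightarrow> 'a list) \<Rightarrow> 'a list \<Rightarrow> 'a list \<Rightarrow> 'a list \<Rightarrow> nat" where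
  "alg_cost step hist xs [] = 0"
| "alg_cost step hist xs (x # \<sigma>) =
     pos xs x + 1 + alg_cost step (hist @ [x]) (step hist xs x) \<sigma>"

definition MTFO_step :: "'a list \<Rightarrow> 'a list \<Rightarrow> 'a \<Rightarrow> 'a list" where
  "MTFO_step hist xs x = (if even (count_list hist x) then mtf x xs else xs)"

definition MTFE_step :: "'a list \<Rightarrow> 'a list \<Rightarrow> 'a \<Rightarrow> 'a list" where
  "MTFE_step hist xs x = (if odd (count_list hist x) then mtf x xs else xs)"

definition TS_step :: "'a list \<Rightarrow> 'a list \<Rightarrow> 'a \<Rightarrow> 'a list" where
  "TS_step hist xs x =
     (if x \<in> set hist then
        (let since = takeWhile (\<lambda>z. z \<noteq> x) (rev hist);
             cands = filter (\<lambda>y. count_list since y \<le> 1) (take (pos xs x) xs)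
         in if cands = [] then xs else move_to (pos xs (hd cands)) x xs)
      else xs)"

definition MTFO :: "'a list \<Rightarrow> 'a list \<Rightarrow> nat" where
  "MTFO xs \<sigma> = alg_cost MTFO_step [] xs \<sigma>"
definition MTFE :: "'a list \<Rightarrow> 'a list \<Rightarrow> nat" where
  "MTFE xs \<sigma> = alg_cost MTFE_step [] xs \<sigma>"
definition TS :: "'a list \<Rightarrow> 'a list \<Rightarrow> nat" where
  "TS xs \<sigma> = alg_cost TS_step [] xs \<sigma>"

text \<open>Offline executions: paid exchanges of adjacent items (cost 1) at any time,
  serving a request at cost (position, 1-based), then a free exchange moving the
  accessed item to any position closer to the front.\<close>
inductive offline_run :: "'a list \<Rightarrow> 'a list \<Rightarrow> nat \<Rightarrow> bool" where
  finish: "offline_run xs [] 0"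
| paid: "Suc i < length xs \<Longrightarrow> offline_run (swap_adj i xs) \<sigma> c \<Longrightarrow> offline_run xs \<sigma> (Suc c)"
| serve: "x \<in> set xs \<Longrightarrow> j \<le> pos xs x \<Longrightarrow> offline_run (move_to j x xs) \<sigma> c
           \<Longrightarrow> offline_run xs (x # \<sigma>) (pos xs x + 1 + c)"

definition OPT :: "'a list \<Rightarrow> 'a list \<Rightarrow> nat" where
  "OPT xs \<sigma> = (LEAST c. offline_run xs \<sigma> c)"

text \<open>Items a_i are represented by the natural number i; initial list [a_1,...,a_l].\<close>
definition init_list :: "nat \<Rightarrow> nat list" where
  "init_list l = [1..<Suc l]"

definition sigma_gamma :: "nat \<Rightarrow> nat \<Rightarrow> nat list" where
  "sigma_gamma l s = concat (replicate (2 * s) (concat (map (\<lambda>i. replicate 3 i) (rev [1..<Suc l]))))"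

end

theory Submission
  imports Defs "HOL-Real_Asymp.Real_Asymp"
begin

text \<open>The blocks of sigma_gamma request the items in the reverse of the list order, and each of
  MTFO, MTFE, TS and MTF ends a block with the requested item at the front; so every block
  requests the item at the rear, and after each pass the list is back in its initial order.
  MTFO and MTFE pay l + 2 for a block in which they move the item on its first request and
  2l + 1 when they move it only on the second, and this alternates between passes. TS never
  moves the item on its first request, since every other item has been requested three times
  since the previous request to it, and pays 2l + 1 per block. For OPT, MTF gives the upper
  bound; the matching lower bound is the pairwise one: projected onto two items the sequence
  is (b^3 a^3)^(2s), which costs 4s on a two-item list, and summing over all pairs bounds the
  cost of every offline execution from below.\<close>

fun alg_list :: "('a list \<Rightarrow> 'a list \<Rightarrow> 'a \<Rightarrow> 'a list) \<Rightarrow> 'a list \<Rightarrow> 'a list \<Rightarrow> 'a list \<Rightarrow> 'a list" where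
  "alg_list step hist xs [] = xs"
| "alg_list step hist xs (x # \<sigma>) = alg_list step (hist @ [x]) (step hist xs x) \<sigma>"

lemma alg_cost_append:
  "alg_cost step hist xs (\<sigma> @ \<tau>) =
     alg_cost step hist xs \<sigma> + alg_cost step (hist @ \<sigma>) (alg_list step hist xs \<sigma>) \<tau>"
  by (induction \<sigma> arbitrary: hist xs) auto

lemma alg_list_append:
  "alg_list step hist xs (\<sigma> @ \<tau>) = alg_list step (hist @ \<sigma>) (alg_list step hist xs \<sigma>) \<tau>"
  by (induction \<sigma> arbitrary: hist xs) auto

lemma pos_Cons: "pos (z # xs) y = (if z = y then 0 else Suc (pos xs y))"
  by (simp add: pos_def)

lemma pos_append: "pos (xs @ ys) y = (if y \<in> set xs then pos xs y else length xs + pos ys y)"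
  unfolding pos_def by (induction xs) auto

lemma pos_snoc: "y \<notin> set xs \<Longrightarrow> pos (xs @ [y]) y = length xs"
  by (simp add: pos_append pos_Cons)

lemma pos_less_length: "y \<in> set xs \<Longrightarrow> pos xs y < length xs"
  by (induction xs) (auto simp: pos_Cons)

lemma nth_pos: "y \<in> set xs \<Longrightarrow> xs ! pos xs y = y"
  by (induction xs) (auto simp: pos_Cons)

lemma pos_nth: "distinct xs \<Longrightarrow> k < length xs \<Longrightarrow> pos xs (xs ! k) = k"
proof (induction xs arbitrary: k)
  case (Cons a xs)
  then show ?case by (cases k) (auto simp: pos_Cons nth_mem)
qed simp

lemma pos_eq_iff: "y \<in> set xs \<Longrightarrow> z \<in> set xs \<Longrightarrow> pos xs y = pos xs z \<longleftrightarrow> y = z"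
  by (metis nth_pos)

lemma count_list_concat_replicate: "count_list (concat (replicate k xs)) y = k * count_list xs y"
  by (induction k) auto

lemma length_concat_replicate: "length (concat (replicate k xs)) = k * length xs"
  by (induction k) auto

lemma filter_concat_replicate: "filter P (concat (replicate k xs)) = concat (replicate k (filter P xs))"
  by (induction k) auto

lemma takeWhile_since_last:
  assumes "y \<notin> set zs"
  shows "takeWhile (\<lambda>z. z \<noteq> y) (rev (xs @ y # zs)) = rev zs"
  using assms takeWhile_append2[of "rev zs" "\<lambda>z. z \<noteq> y" "y # rev xs"] by auto

lemma mtf_snoc: "y \<notin> set xs \<Longrightarrow> mtf y (xs @ [y]) = y # xs"
  by (simp add: mtf_def move_to_def remove1_append)

lemma mtf_Cons: "y \<notin> set xs \<Longrightarrow> mtf y (y # xs) = y # xs"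
  by (simp add: mtf_def move_to_def)

abbreviation triples :: "'a list \<Rightarrow> 'a list" where
  "triples ys \<equiv> concat (map (\<lambda>y. replicate 3 y) ys)"

lemma replicate_3: "replicate 3 y = [y, y, y]"
  by (simp add: numeral_3_eq_3)

lemma count_list_triples: "count_list (triples ys) y = 3 * count_list ys y"
  by (induction ys) (auto simp: replicate_3)

lemma set_triples: "set (triples ys) = set ys"
  by (induction ys) auto

lemma length_triples: "length (triples ys) = 3 * length ys"
  by (induction ys) auto

lemma filter_triples: "filter P (triples ys) = triples (filter P ys)"
  by (induction ys) (auto simp: replicate_3)

lemma alg_cost_pass:
  assumes block: "\<And>d y t. ys = d @ y # t \<Longrightarrow>
     alg_cost step (hist @ triples d) (rev d @ rev t @ [y]) (replicate 3 y) = c \<and>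
     alg_list step (hist @ triples d) (rev d @ rev t @ [y]) (replicate 3 y) = y # rev d @ rev t"
  shows "alg_cost step hist (rev ys) (triples ys) = length ys * c \<and>
         alg_list step hist (rev ys) (triples ys) = rev ys"
proof -
  have "ys = d @ t \<Longrightarrow>
      alg_cost step (hist @ triples d) (rev d @ rev t) (triples t) = length t * c \<and>
      alg_list step (hist @ triples d) (rev d @ rev t) (triples t) = rev t @ rev d" for d t
  proof (induction t arbitrary: d)
    case (Cons y t)
    have "alg_cost step (hist @ triples (d @ [y])) (rev (d @ [y]) @ rev t) (triples t) = length t * c \<and>
        alg_list step (hist @ triples (d @ [y])) (rev (d @ [y]) @ rev t) (triples t) = rev t @ rev (d @ [y])"
      using Cons by simp
    with block[of d y t] Cons.prems show ?case
      by (simp add: alg_cost_append alg_list_append)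
  qed simp
  from this[of "[]" ys] show ?thesis by simp
qed

lemma alg_cost_repeat:
  assumes "\<And>k. alg_cost step (concat (replicate k \<sigma>)) xs \<sigma> = c k \<and>
                alg_list step (concat (replicate k \<sigma>)) xs \<sigma> = xs"
  shows "alg_cost step (concat (replicate k \<sigma>)) xs (concat (replicate n \<sigma>)) = (\<Sum>j<n. c (k + j))"
proof (induction n arbitrary: k)
  case (Suc n)
  have "concat (replicate k \<sigma>) @ \<sigma> = concat (replicate (Suc k) \<sigma>)"
    by (simp add: replicate_append_same[symmetric])
  then have "alg_cost step (concat (replicate k \<sigma>)) xs (concat (replicate (Suc n) \<sigma>))
      = c k + (\<Sum>j<n. c (Suc k + j))"
    using assms[of k] Suc.IH[of "Suc k"] by (simp add: alg_cost_append)
  also have "\<dots> = (\<Sum>j<Suc n. c (k + j))"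
    by (subst sum.lessThan_Suc_shift) simp
  finally show ?case .
qed simp

lemma sum_alternating:
  "(\<Sum>k<2 * s. if even k then a else b) = s * (a + b :: nat)"
  by (induction s) (auto simp: sum.lessThan_Suc)

lemma alg_cost_alternating_passes:
  assumes block: "\<And>k d y t. ys = d @ y # t \<Longrightarrow>
     alg_cost step (concat (replicate k (triples ys)) @ triples d) (rev d @ rev t @ [y]) (replicate 3 y)
       = (if even k then a else b) \<and>
     alg_list step (concat (replicate k (triples ys)) @ triples d) (rev d @ rev t @ [y]) (replicate 3 y)
       = y # rev d @ rev t"
  shows "alg_cost step [] (rev ys) (concat (replicate (2 * s) (triples ys))) = s * length ys * (a + b)"
proof -
  have "alg_cost step (concat (replicate 0 (triples ys))) (rev ys) (concat (replicate (2 * s) (triples ys)))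
      = (\<Sum>k<2 * s. length ys * (if even (0 + k) then a else b))"
    by (rule alg_cost_repeat) (use alg_cost_pass[OF block] in auto)
  also have "\<dots> = length ys * (\<Sum>k<2 * s. if even k then a else b)"
    by (simp add: sum_distrib_left)
  finally show ?thesis by (simp add: sum_alternating)
qed

section \<open>MTF, MTFO, MTFE and TS on repeated passes\<close>

abbreviation MTF_step :: "'a list \<Rightarrow> 'a list \<Rightarrow> 'a \<Rightarrow> 'a list" where
  "MTF_step hist xs x \<equiv> mtf x xs"

lemma MTF_block:
  assumes "y \<notin> set us"
  shows "alg_cost MTF_step hist (us @ [y]) (replicate 3 y) = length us + 3 \<and>
         alg_list MTF_step hist (us @ [y]) (replicate 3 y) = y # us"
  using assms by (simp add: replicate_3 mtf_snoc mtf_Cons pos_snoc pos_Cons)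

lemma MTFO_block:
  assumes "y \<notin> set us"
  shows "alg_cost MTFO_step hist (us @ [y]) (replicate 3 y) =
           (if even (count_list hist y) then length us + 3 else 2 * length us + 3) \<and>
         alg_list MTFO_step hist (us @ [y]) (replicate 3 y) = y # us"
  using assms by (simp add: replicate_3 MTFO_step_def mtf_snoc mtf_Cons pos_snoc pos_Cons)

lemma MTFE_block:
  assumes "y \<notin> set us"
  shows "alg_cost MTFE_step hist (us @ [y]) (replicate 3 y) =
           (if odd (count_list hist y) then length us + 3 else 2 * length us + 3) \<and>
         alg_list MTFE_step hist (us @ [y]) (replicate 3 y) = y # us"
  using assms by (simp add: replicate_3 MTFE_step_def mtf_snoc mtf_Cons pos_snoc pos_Cons)

lemma TS_block:
  assumes y: "y \<notin> set us"
    and since: "y \<notin> set hist \<or> (\<forall>u\<in>set us. 2 \<le> count_list (takeWhile (\<lambda>z. z \<noteq> y) (rev hist)) u)"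
  shows "alg_cost TS_step hist (us @ [y]) (replicate 3 y) = 2 * length us + 3 \<and>
         alg_list TS_step hist (us @ [y]) (replicate 3 y) = y # us"
proof -
  have first: "TS_step hist (us @ [y]) y = us @ [y]"
  proof (cases "y \<in> set hist")
    case True
    with since have "filter (\<lambda>u. count_list (takeWhile (\<lambda>z. z \<noteq> y) (rev hist)) u \<le> 1) us = []"
      by (auto simp: filter_empty_conv)
    with True y show ?thesis by (simp add: TS_step_def pos_snoc)
  qed (simp add: TS_step_def)
  have second: "TS_step (hist @ [y]) (us @ [y]) y = y # us"
  proof (cases us)
    case (Cons u us')
    with y show ?thesis
      by (auto simp: TS_step_def Let_def pos_snoc pos_Cons move_to_def remove1_append)
  qed (simp add: TS_step_def pos_Cons)
  have third: "TS_step (hist @ [y, y]) (y # us) y = y # us"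
    by (simp add: TS_step_def Let_def pos_Cons)
  from first second third y show ?thesis
    by (simp add: replicate_3 pos_snoc pos_Cons)
qed

lemma count_list_passes:
  assumes "distinct ys" "ys = d @ y # t"
  shows "count_list (concat (replicate k (triples ys)) @ triples d) y = 3 * k"
  using assms by (simp add: count_list_concat_replicate count_list_triples replicate_3)

lemma MTF_passes:
  assumes "distinct ys"
  shows "alg_cost MTF_step [] (rev ys) (concat (replicate (2 * s) (triples ys)))
           = s * length ys * (2 * length ys + 4)"
proof -
  have "alg_cost MTF_step [] (rev ys) (concat (replicate (2 * s) (triples ys)))
      = s * length ys * ((length ys + 2) + (length ys + 2))"
  proof (rule alg_cost_alternating_passes, goal_cases)
    case ys: (1 k d y t)
    with assms MTF_block[of y "rev d @ rev t"] show ?case by auto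
  qed
  then show ?thesis by (simp add: algebra_simps)
qed

lemma MTFO_passes:
  assumes "distinct ys"
  shows "MTFO (rev ys) (concat (replicate (2 * s) (triples ys))) = s * length ys * (3 * length ys + 3)"
proof -
  have "alg_cost MTFO_step [] (rev ys) (concat (replicate (2 * s) (triples ys)))
      = s * length ys * ((length ys + 2) + (2 * length ys + 1))"
  proof (rule alg_cost_alternating_passes, goal_cases)
    case ys: (1 k d y t)
    with assms MTFO_block[of y "rev d @ rev t"] count_list_passes[OF assms ys] show ?case
      by auto
  qed
  then show ?thesis by (simp add: MTFO_def algebra_simps)
qed

lemma MTFE_passes:
  assumes "distinct ys"
  shows "MTFE (rev ys) (concat (replicate (2 * s) (triples ys))) = s * length ys * (3 * length ys + 3)"
proof -
  have "alg_cost MTFE_step [] (rev ys) (concat (replicate (2 * s) (triples ys)))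
      = s * length ys * ((2 * length ys + 1) + (length ys + 2))"
  proof (rule alg_cost_alternating_passes, goal_cases)
    case ys: (1 k d y t)
    with assms MTFE_block[of y "rev d @ rev t"] count_list_passes[OF assms ys] show ?case
      by auto
  qed
  then show ?thesis by (simp add: MTFE_def algebra_simps)
qed

lemma TS_passes:
  assumes "distinct ys"
  shows "TS (rev ys) (concat (replicate (2 * s) (triples ys))) = s * length ys * (4 * length ys + 2)"
proof -
  have "alg_cost TS_step [] (rev ys) (concat (replicate (2 * s) (triples ys)))
      = s * length ys * ((2 * length ys + 1) + (2 * length ys + 1))"
  proof (rule alg_cost_alternating_passes, goal_cases)
    case ys: (1 k d y t)
    let ?hist = "concat (replicate k (triples ys)) @ triples d"
    have "y \<notin> set ?hist \<or>
        (\<forall>u\<in>set (rev d @ rev t). 2 \<le> count_list (takeWhile (\<lambda>z. z \<noteq> y) (rev ?hist)) u)"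
    proof (cases k)
      case (Suc k')
      have "?hist = (concat (replicate k' (triples ys)) @ triples d @ [y, y]) @ y # (triples t @ triples d)"
        using Suc ys by (simp add: replicate_append_same[symmetric] replicate_3)
      moreover have "y \<notin> set (triples t @ triples d)"
        using assms ys by (simp add: set_triples)
      ultimately have "takeWhile (\<lambda>z. z \<noteq> y) (rev ?hist) = rev (triples t @ triples d)"
        by (metis takeWhile_since_last)
      then have "\<forall>u\<in>set (rev d @ rev t). 2 \<le> count_list (takeWhile (\<lambda>z. z \<noteq> y) (rev ?hist)) u"
        using count_list_0_iff[of d] count_list_0_iff[of t] by (fastforce simp: count_list_triples)
      then show ?thesis ..
    qed (use assms ys in \<open>simp add: set_triples\<close>)
    with assms ys TS_block[of y "rev d @ rev t" ?hist] show ?case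
      by auto
  qed
  then show ?thesis by (simp add: TS_def algebra_simps)
qed

section \<open>The pairwise lower bound for offline executions\<close>

text \<open>pair_opt a b \<sigma> is the optimal cost of serving the requests of \<sigma> to a and b on the
  two-item list [a, b], counting only the unit paid for accessing the rear item and the
  paid exchanges; requests to other items are ignored.\<close>

fun pair_opt :: "'a \<Rightarrow> 'a \<Rightarrow> 'a list \<Rightarrow> nat" where
  "pair_opt a b [] = 0"
| "pair_opt a b (x # \<sigma>) =
     (if x = a then min (pair_opt a b \<sigma>) (Suc (pair_opt b a \<sigma>))
      else if x = b then Suc (min (pair_opt a b \<sigma>) (pair_opt b a \<sigma>))
      else pair_opt a b \<sigma>)"

definition pair_cost :: "'a list \<Rightarrow> 'a list \<Rightarrow> 'a \<times> 'a \<Rightarrow> nat" where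
  "pair_cost xs \<sigma> = (\<lambda>(y, z). if pos xs y < pos xs z then pair_opt y z \<sigma> else pair_opt z y \<sigma>)"

definition offdiag :: "'a set \<Rightarrow> ('a \<times> 'a) set" where
  "offdiag S = S \<times> S - Id"

definition pair_bound :: "'a list \<Rightarrow> 'a list \<Rightarrow> nat" where
  "pair_bound xs \<sigma> = (\<Sum>p\<in>offdiag (set xs). pair_cost xs \<sigma> p)"

lemma pair_opt_swap: "a \<noteq> b \<Longrightarrow> pair_opt a b \<sigma> \<le> Suc (pair_opt b a \<sigma>)"
proof (induction \<sigma> arbitrary: a b)
  case (Cons x \<sigma>)
  then have "pair_opt a b \<sigma> \<le> Suc (pair_opt b a \<sigma>)" "pair_opt b a \<sigma> \<le> Suc (pair_opt a b \<sigma>)"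
    by auto
  with Cons.prems show ?case by (auto simp: min_def)
qed simp

lemma finite_offdiag: "finite S \<Longrightarrow> finite (offdiag S)"
  by (auto simp: offdiag_def)

lemma card_offdiag: "finite S \<Longrightarrow> card (offdiag S) = card S * card S - card S"
proof -
  assume S: "finite S"
  have diag: "Id_on S = (\<lambda>x. (x, x)) ` S" by auto
  have "card (offdiag S) = card (S \<times> S - Id_on S)"
    by (rule arg_cong[where f = card]) (auto simp: offdiag_def)
  also have "\<dots> = card (S \<times> S) - card (Id_on S)"
    using S by (intro card_Diff_subset) (auto simp: diag)
  also have "\<dots> = card S * card S - card S"
    using S by (simp add: diag card_image inj_on_def card_cartesian_product)
  finally show ?thesis .
qed

lemma sum_le_card_add:
  assumes "finite A" "\<And>p. p \<in> A \<Longrightarrow> f p \<le> of_bool (P p) + g p"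
  shows "sum f A \<le> card (A \<inter> {p. P p}) + (sum g A :: nat)"
proof -
  have "sum f A \<le> (\<Sum>p\<in>A. of_bool (P p) + g p)" by (rule sum_mono) (rule assms(2))
  with assms(1) show ?thesis by (simp add: sum.distrib)
qed

lemma set_swap_adj: "Suc i < length xs \<Longrightarrow> set (swap_adj i xs) = set xs"
  by (simp add: swap_adj_def set_swap)

lemma distinct_swap_adj: "Suc i < length xs \<Longrightarrow> distinct (swap_adj i xs) = distinct xs"
  by (simp add: swap_adj_def distinct_swap)

lemma pos_swap_adj:
  assumes "distinct xs" "Suc i < length xs" "y \<in> set xs"
  shows "pos (swap_adj i xs) y =
           (if pos xs y = i then Suc i else if pos xs y = Suc i then i else pos xs y)"
proof -
  let ?k = "if pos xs y = i then Suc i else if pos xs y = Suc i then i else pos xs y"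
  have "pos xs y < length xs" "xs ! pos xs y = y"
    using pos_less_length[OF assms(3)] nth_pos[OF assms(3)] by auto
  with assms(2) have k: "swap_adj i xs ! ?k = y" "?k < length (swap_adj i xs)"
    unfolding swap_adj_def by (auto simp: nth_list_update)
  have "distinct (swap_adj i xs)"
    using assms(1,2) by (simp add: distinct_swap_adj)
  from pos_nth[OF this k(2)] show ?thesis unfolding k(1) .
qed

lemma pair_cost_swap_adj:
  assumes "distinct xs" "Suc i < length xs" "y \<in> set xs" "z \<in> set xs" "y \<noteq> z"
  shows "pair_cost xs \<sigma> (y, z) \<le>
           of_bool ((y, z) \<in> {(xs ! i, xs ! Suc i), (xs ! Suc i, xs ! i)}) + pair_cost (swap_adj i xs) \<sigma> (y, z)"
proof -
  have "y = xs ! k \<longleftrightarrow> pos xs y = k" "z = xs ! k \<longleftrightarrow> pos xs z = k" if "k < length xs" for k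
    using assms that by (metis nth_pos pos_nth)+
  then have "(y, z) \<in> {(xs ! i, xs ! Suc i), (xs ! Suc i, xs ! i)} \<longleftrightarrow>
      (pos xs y = i \<and> pos xs z = Suc i) \<or> (pos xs y = Suc i \<and> pos xs z = i)"
    using assms(2) by auto
  moreover have "pos xs y \<noteq> pos xs z" using assms(3-5) by (simp add: pos_eq_iff)
  ultimately show ?thesis
    using pair_opt_swap[OF assms(5), of \<sigma>] pair_opt_swap[OF assms(5)[symmetric], of \<sigma>]
    by (auto simp: pair_cost_def pos_swap_adj[OF assms(1-3)] pos_swap_adj[OF assms(1,2,4)])
qed

lemma pair_bound_swap_adj:
  assumes "distinct xs" "Suc i < length xs"
  shows "pair_bound xs \<sigma> \<le> 2 + pair_bound (swap_adj i xs) \<sigma>"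
proof -
  let ?Q = "{(xs ! i, xs ! Suc i), (xs ! Suc i, xs ! i)}"
  have "pair_bound xs \<sigma> \<le> card (offdiag (set xs) \<inter> {p. p \<in> ?Q}) + pair_bound (swap_adj i xs) \<sigma>"
    unfolding pair_bound_def set_swap_adj[OF assms(2)]
  proof (rule sum_le_card_add)
    fix p assume "p \<in> offdiag (set xs)"
    then obtain y z where "p = (y, z)" "y \<in> set xs" "z \<in> set xs" "y \<noteq> z"
      by (auto simp: offdiag_def)
    with pair_cost_swap_adj[OF assms this(2-4)]
    show "pair_cost xs \<sigma> p \<le> of_bool (p \<in> ?Q) + pair_cost (swap_adj i xs) \<sigma> p"
      by simp
  qed (simp add: finite_offdiag)
  also have "card (offdiag (set xs) \<inter> {p. p \<in> ?Q}) \<le> card ?Q"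
    by (rule card_mono) auto
  also have "card ?Q \<le> 2"
    by (rule card_insert_le_m1) auto
  finally show ?thesis by simp
qed

lemma move_to_split:
  assumes "distinct xs" "x \<in> set xs" "j \<le> pos xs x"
  obtains as bs cs where "xs = as @ bs @ x # cs" "move_to j x xs = as @ x # bs @ cs" "length as = j"
proof -
  obtain as cs where xs: "xs = as @ x # cs"
    using split_list[OF assms(2)] by blast
  with assms(1) have "x \<notin> set as" by simp
  with xs assms(3) have "remove1 x xs = as @ cs" "j \<le> length as"
    by (auto simp: remove1_append pos_append pos_Cons)
  with xs that[of "take j as" "drop j as" cs] show ?thesis
    by (simp add: move_to_def)
qed

lemma distinct_set_move_to:
  assumes "distinct xs" "x \<in> set xs" "j \<le> pos xs x"
  shows "distinct (move_to j x xs) \<and> set (move_to j x xs) = set xs"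
proof -
  obtain as bs cs where split: "xs = as @ bs @ x # cs" "move_to j x xs = as @ x # bs @ cs"
    using assms by (rule move_to_split)
  show ?thesis using assms(1) unfolding split(2) unfolding split(1) by auto
qed

lemma pos_move_to:
  assumes "distinct xs" "x \<in> set xs" "j \<le> pos xs x" "y \<in> set xs"
  shows "pos (move_to j x xs) y =
           (if y = x then j else if pos xs y < j then pos xs y
            else if pos xs y < pos xs x then Suc (pos xs y) else pos xs y)"
proof -
  obtain as bs cs where
    split: "xs = as @ bs @ x # cs" "move_to j x xs = as @ x # bs @ cs" "length as = j"
    using assms(1-3) by (rule move_to_split)
  have "y \<in> set as \<or> y \<in> set bs \<or> y = x \<or> y \<in> set cs" using assms(4) split(1) by auto
  moreover have "distinct (as @ bs @ x # cs)" using assms(1) split(1) by simp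
  ultimately show ?thesis
    unfolding split(2) unfolding split(1)
    using split(3) pos_less_length[of y as] pos_less_length[of y bs]
    by (auto simp: pos_append pos_Cons)
qed

lemma pair_cost_move_to:
  assumes "distinct xs" "x \<in> set xs" "j \<le> pos xs x" "y \<in> set xs" "z \<in> set xs" "y \<noteq> z"
  shows "pair_cost xs (x # \<sigma>) (y, z) \<le>
           of_bool ((z = x \<and> pos xs y < pos xs x) \<or> (y = x \<and> pos xs z < pos xs x))
           + pair_cost (move_to j x xs) \<sigma> (y, z)"
proof -
  have "pos xs y \<noteq> pos xs z" "y = x \<or> pos xs y \<noteq> pos xs x" "z = x \<or> pos xs z \<noteq> pos xs x"
    using assms(2,4-6) by (auto simp: pos_eq_iff)
  with assms(3,6) show ?thesis
    by (auto simp: pair_cost_def pos_move_to[OF assms(1-4)] pos_move_to[OF assms(1-3,5)] min_def;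
        linarith)
qed

lemma card_items_before: "card {y \<in> set xs. pos xs y < pos xs x} \<le> pos xs x"
proof -
  have "{y \<in> set xs. pos xs y < pos xs x} \<subseteq> (!) xs ` {..<pos xs x}"
    using nth_pos by force
  then have "card {y \<in> set xs. pos xs y < pos xs x} \<le> card ((!) xs ` {..<pos xs x})"
    by (intro card_mono) auto
  also have "\<dots> \<le> pos xs x"
    using card_image_le[of "{..<pos xs x}" "(!) xs"] by simp
  finally show ?thesis .
qed

lemma pair_bound_move_to:
  assumes "distinct xs" "x \<in> set xs" "j \<le> pos xs x"
  shows "pair_bound xs (x # \<sigma>) \<le> 2 * pos xs x + pair_bound (move_to j x xs) \<sigma>"
proof -
  let ?P = "\<lambda>(y, z). (z = x \<and> pos xs y < pos xs x) \<or> (y = x \<and> pos xs z < pos xs x)"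
  let ?B = "{y \<in> set xs. pos xs y < pos xs x}"
  have "pair_bound xs (x # \<sigma>) \<le> card (offdiag (set xs) \<inter> {p. ?P p}) + pair_bound (move_to j x xs) \<sigma>"
    unfolding pair_bound_def distinct_set_move_to[OF assms, THEN conjunct2]
  proof (rule sum_le_card_add)
    fix p assume "p \<in> offdiag (set xs)"
    then obtain y z where "p = (y, z)" "y \<in> set xs" "z \<in> set xs" "y \<noteq> z"
      by (auto simp: offdiag_def)
    with pair_cost_move_to[OF assms this(2-4)]
    show "pair_cost xs (x # \<sigma>) p \<le> of_bool (?P p) + pair_cost (move_to j x xs) \<sigma> p"
      by simp
  qed (simp add: finite_offdiag)
  also have "card (offdiag (set xs) \<inter> {p. ?P p}) \<le> card (?B \<times> {x} \<union> {x} \<times> ?B)"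
    by (rule card_mono) (auto simp: offdiag_def)
  also have "\<dots> \<le> card (?B \<times> {x}) + card ({x} \<times> ?B)"
    by (rule card_Un_le)
  also have "\<dots> \<le> 2 * pos xs x"
    using card_items_before[of xs x] by (simp add: card_cartesian_product)
  finally show ?thesis by simp
qed

text \<open>Serving a request at position p costs p + 1 and lowers pair_bound by at most 2p (only the
  pairs of the requested item with an item in front of it are affected); a paid exchange costs 1
  and lowers it by at most 2. The factor 2 appears because pair_bound counts every unordered pair
  twice.\<close>

lemma offline_run_lower_bound:
  "offline_run xs \<sigma> c \<Longrightarrow> distinct xs \<Longrightarrow> 2 * length \<sigma> + pair_bound xs \<sigma> \<le> 2 * c"
proof (induction rule: offline_run.induct)
  case (finish xs)
  have "pair_cost xs [] p = 0" for p
    by (simp add: pair_cost_def split_beta)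
  then show ?case by (simp add: pair_bound_def)
next
  case (paid i xs \<sigma> c)
  have "distinct (swap_adj i xs)"
    using paid.hyps(1) paid.prems by (simp add: distinct_swap_adj)
  from paid.IH[OF this] pair_bound_swap_adj[OF paid.prems paid.hyps(1), of \<sigma>] show ?case
    by simp
next
  case (serve x xs j \<sigma> c)
  have "distinct (move_to j x xs)"
    using distinct_set_move_to[OF serve.prems serve.hyps(1,2)] by blast
  from serve.IH[OF this] pair_bound_move_to[OF serve.prems serve.hyps(1,2), of \<sigma>] show ?case
    by simp
qed

lemma offline_run_alg_cost_MTF:
  "distinct xs \<Longrightarrow> set \<sigma> \<subseteq> set xs \<Longrightarrow> offline_run xs \<sigma> (alg_cost MTF_step hist xs \<sigma>)"
proof (induction \<sigma> arbitrary: hist xs)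
  case Nil
  then show ?case by (simp add: offline_run.finish)
next
  case (Cons x \<sigma>)
  then have x: "x \<in> set xs" by simp
  with Cons.prems distinct_set_move_to[of xs x 0] have "distinct (mtf x xs)" "set \<sigma> \<subseteq> set (mtf x xs)"
    by (simp_all add: mtf_def)
  then have "offline_run (mtf x xs) \<sigma> (alg_cost MTF_step (hist @ [x]) (mtf x xs) \<sigma>)"
    by (rule Cons.IH)
  with x show ?case
    using offline_run.serve[of x xs 0, folded mtf_def] by simp
qed

lemma pair_opt_filter: "P a \<Longrightarrow> P b \<Longrightarrow> pair_opt a b (filter P \<sigma>) = pair_opt a b \<sigma>"
  by (induction \<sigma> arbitrary: a b) auto

lemma pair_opt_block:
  assumes "a \<noteq> b"
  shows "pair_opt a b (b # b # b # a # a # a # \<sigma>) = pair_opt a b \<sigma> + 2"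
  using assms pair_opt_swap[OF assms, of \<sigma>] pair_opt_swap[OF assms[symmetric], of \<sigma>]
  by (simp add: min_def)

lemma pair_opt_blocks:
  assumes "a \<noteq> b"
  shows "pair_opt a b (concat (replicate n (triples [b, a]))) = 2 * n"
proof (induction n)
  case (Suc n)
  have "concat (replicate (Suc n) (triples [b, a])) = b # b # b # a # a # a # concat (replicate n (triples [b, a]))"
    by (simp add: replicate_3)
  then show ?case
    by (simp only: pair_opt_block[OF assms] Suc.IH) simp
qed simp

lemma filter_two_items:
  assumes "distinct xs" "y \<in> set xs" "z \<in> set xs" "pos xs y < pos xs z"
  shows "filter (\<lambda>x. x = y \<or> x = z) xs = [y, z]"
  using assms
proof (induction xs)
  case (Cons a xs)
  have "filter (\<lambda>x. x = z) xs = [z]" if "distinct xs" "z \<in> set xs"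
    using that by (induction xs) (auto simp: filter_empty_conv)
  moreover have "filter (\<lambda>x. x = y \<or> x = z) xs = filter (\<lambda>x. x = z) xs" if "y \<notin> set xs"
    using that by (intro filter_cong) auto
  ultimately show ?case using Cons
    by (auto simp: pos_Cons filter_empty_conv cong: filter_cong split: if_splits)
qed simp

lemma pair_opt_passes:
  assumes "distinct ys" "a \<in> set ys" "b \<in> set ys" "pos (rev ys) a < pos (rev ys) b"
  shows "pair_opt a b (concat (replicate n (triples ys))) = 2 * n"
proof -
  let ?P = "\<lambda>x. x = a \<or> x = b"
  have "filter ?P (rev ys) = [a, b]"
    using assms by (intro filter_two_items) auto
  then have "filter ?P ys = [b, a]"
    using rev_filter[of ?P "rev ys"] by simp
  then have "filter ?P (concat (replicate n (triples ys))) = concat (replicate n (triples [b, a]))"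
    by (simp only: filter_concat_replicate filter_triples)
  moreover have "a \<noteq> b" using assms(4) by auto
  ultimately show ?thesis
    using pair_opt_filter[of ?P a b] pair_opt_blocks by metis
qed

lemma pair_cost_passes:
  assumes "distinct ys" "y \<in> set ys" "z \<in> set ys" "y \<noteq> z"
  shows "pair_cost (rev ys) (concat (replicate n (triples ys))) (y, z) = 2 * n"
proof -
  have "pos (rev ys) y \<noteq> pos (rev ys) z"
    using assms(2-4) by (simp add: pos_eq_iff)
  then show ?thesis
    using assms pair_opt_passes[of ys y z n] pair_opt_passes[of ys z y n]
    by (auto simp: pair_cost_def)
qed

lemma pair_bound_passes:
  assumes "distinct ys"
  shows "pair_bound (rev ys) (concat (replicate n (triples ys)))
           = 2 * n * (length ys * length ys - length ys)"
proof -
  have "pair_bound (rev ys) (concat (replicate n (triples ys))) = (\<Sum>p\<in>offdiag (set ys). 2 * n)"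
    unfolding pair_bound_def set_rev
  proof (rule sum.cong)
    fix p assume "p \<in> offdiag (set ys)"
    then obtain y z where "p = (y, z)" "y \<in> set ys" "z \<in> set ys" "y \<noteq> z"
      by (auto simp: offdiag_def)
    then show "pair_cost (rev ys) (concat (replicate n (triples ys))) p = 2 * n"
      using pair_cost_passes[OF assms] by simp
  qed simp
  also have "\<dots> = 2 * n * (length ys * length ys - length ys)"
    using assms by (simp add: card_offdiag distinct_card)
  finally show ?thesis .
qed

lemma OPT_passes:
  assumes "distinct ys"
  shows "OPT (rev ys) (concat (replicate (2 * s) (triples ys))) = s * length ys * (2 * length ys + 4)"
  unfolding OPT_def
proof (rule Least_equality)
  show "offline_run (rev ys) (concat (replicate (2 * s) (triples ys))) (s * length ys * (2 * length ys + 4))"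
  proof -
    have "set (concat (replicate (2 * s) (triples ys))) \<subseteq> set (rev ys)"
      by (auto simp: set_triples)
    from offline_run_alg_cost_MTF[OF _ this, of "[]"] assms show ?thesis
      by (simp add: MTF_passes)
  qed
next
  fix c assume "offline_run (rev ys) (concat (replicate (2 * s) (triples ys))) c"
  from offline_run_lower_bound[OF this] assms
  have "2 * length (concat (replicate (2 * s) (triples ys))) + 4 * s * (length ys * length ys - length ys) \<le> 2 * c"
    by (simp add: pair_bound_passes)
  moreover have "length (concat (replicate (2 * s) (triples ys))) = 6 * s * length ys"
    by (simp only: length_concat_replicate length_triples)
  moreover have "length ys \<le> length ys * length ys" by (rule le_square)
  ultimately show "s * length ys * (2 * length ys + 4) \<le> c"
    by (simp add: algebra_simps diff_mult_distrib2)
qed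

lemma sigma_gamma_passes: "sigma_gamma l s = concat (replicate (2 * s) (triples (rev [1..<Suc l])))"
  by (simp add: sigma_gamma_def)

theorem lemma9:
  shows "\<exists>gO gE gT gOPT :: nat \<Rightarrow> real.
     gO \<in> o[at_top](\<lambda>l. real l ^ 2) \<and> gE \<in> o[at_top](\<lambda>l. real l ^ 2) \<and>
     gT \<in> o[at_top](\<lambda>l. real l ^ 2) \<and> gOPT \<in> o[at_top](\<lambda>l. real l ^ 2) \<and>
     (\<forall>l s. s \<ge> 1 \<longrightarrow>
        real (MTFO (init_list l) (sigma_gamma l s)) = real s * (3 * real l ^ 2 + gO l) \<and>
        real (MTFE (init_list l) (sigma_gamma l s)) = real s * (3 * real l ^ 2 + gE l) \<and>
        real (TS (init_list l) (sigma_gamma l s)) = real s * (4 * real l ^ 2 + gT l) \<and>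
        real (OPT (init_list l) (sigma_gamma l s)) = real s * (2 * real l ^ 2 + gOPT l))"
proof (intro exI conjI allI impI)
  show "(\<lambda>l. 3 * real l) \<in> o[at_top](\<lambda>l. real l ^ 2)" by real_asymp
  show "(\<lambda>l. 3 * real l) \<in> o[at_top](\<lambda>l. real l ^ 2)" by real_asymp
  show "(\<lambda>l. 2 * real l) \<in> o[at_top](\<lambda>l. real l ^ 2)" by real_asymp
  show "(\<lambda>l. 4 * real l) \<in> o[at_top](\<lambda>l. real l ^ 2)" by real_asymp
  fix l s :: nat
  have ys: "distinct (rev [1..<Suc l])" and len: "length (rev [1..<Suc l]) = l" by simp_all
  have "MTFO (init_list l) (sigma_gamma l s) = s * l * (3 * l + 3)"
    "MTFE (init_list l) (sigma_gamma l s) = s * l * (3 * l + 3)"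
    "TS (init_list l) (sigma_gamma l s) = s * l * (4 * l + 2)"
    "OPT (init_list l) (sigma_gamma l s) = s * l * (2 * l + 4)"
    using MTFO_passes[OF ys] MTFE_passes[OF ys] TS_passes[OF ys] OPT_passes[OF ys]
    unfolding sigma_gamma_passes init_list_def by (simp_all only: rev_rev_ident len)
  then show "real (MTFO (init_list l) (sigma_gamma l s)) = real s * (3 * real l ^ 2 + 3 * real l)"
    "real (MTFE (init_list l) (sigma_gamma l s)) = real s * (3 * real l ^ 2 + 3 * real l)"
    "real (TS (init_list l) (sigma_gamma l s)) = real s * (4 * real l ^ 2 + 2 * real l)"
    "real (OPT (init_list l) (sigma_gamma l s)) = real s * (2 * real l ^ 2 + 4 * real l)"
    by (simp_all add: power2_eq_square algebra_simps)
qed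

end
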